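(* Let $N>0$, $m>0$, $F>0$, $\alpha>0$, $w>0$, $\tau\in(0,1)$, $g\geq 0$, $L_g\geq 0$, and define \[ L=\frac{N\left[(1-\tau)(mL_g+\alpha F)+(mg+F)mN\right]}{\alpha+(Nm-\alpha)\tau},\qquad q=\frac{(1-\tau)(L+L_g-\alpha g)}{\left(Nm+\alpha(1-\tau)\right)(L+L_g)}, \] \[ p=\frac{L+L_g}{L+L_g-\alpha g}\left(mw+\frac{\alpha(1-\tau)w}{N}\right). \] If $Nm>\alpha$, then $L+L_g-\alpha\left((L+L_g)q+g\right)>0$, and the price $p$ is positive.
   Context: These are the symmetric-equilibrium quantities of a monopolistic-competition general equilibrium model: $N$ is the measure of firms (= varieties), $m$ and $F$ the marginal and fixed labor inputs, $\alpha$ the CARA utility parameter, $w$ the nominal wage, $\tau$ the proportional income tax rate, $g$ the government purchase of each variety, $L_g$ government employment, $L$ private employment, $q$ per-capita consumption of each variety, and $p$ the common price. They satisfy $L=N[m(L+L_g)q+mg+F]$, $q=(1-\tau)w/(Np)$, and equivalently $p=mw(L+L_g)/\left(L+L_g-\alpha((L+L_g)q+g)\right)$. *)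

theory Defs
  imports Complex_Main
begin

end

theory Submission
  imports Defs
begin

text \<open>Since \<open>\<alpha> < N m\<close>, the denominator of \<open>L\<close> lies between \<open>\<alpha>\<close> and \<open>N m\<close>, so
  \<open>L\<close> exceeds the government's labour demand \<open>\<alpha> g\<close>. Substituting \<open>q\<close> turns the private
  labour surplus into \<open>(L + L\<^sub>g - \<alpha> g) N m / (N m + \<alpha> (1 - \<tau>))\<close>, which is therefore
  positive, and so is the markup factor in \<open>p\<close>.\<close>

lemma affine_combination_between:
  fixes a b t :: real
  assumes "a \<le> b" and "0 \<le> t" and "t \<le> 1"
  shows "a \<le> a + (b - a) * t" and "a + (b - a) * t \<le> b"
proof -
  have "(b - a) * t \<le> (b - a) * 1"
    using assms by (intro mult_left_mono) auto
  then show "a + (b - a) * t \<le> b" by simp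
  show "a \<le> a + (b - a) * t"
    using assms by simp
qed

lemma alpha_g_less_private_employment:
  fixes N m F \<alpha> \<tau> g L\<^sub>g :: real
  assumes "N > 0" and "m > 0" and "F > 0" and "\<alpha> > 0"
    and "0 < \<tau>" and "\<tau> < 1" and "g \<ge> 0" and "L\<^sub>g \<ge> 0"
    and "\<alpha> < N * m"
  shows "\<alpha> * g < N * ((1 - \<tau>) * (m * L\<^sub>g + \<alpha> * F) + (m * g + F) * m * N)
                    / (\<alpha> + (N * m - \<alpha>) * \<tau>)"
proof -
  define den where "den = \<alpha> + (N * m - \<alpha>) * \<tau>"
  have "\<alpha> \<le> den" and den_le: "den \<le> N * m"
    using affine_combination_between[of \<alpha> "N * m" \<tau>] assms by (auto simp: den_def)
  then have den_pos: "den > 0"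
    using \<open>\<alpha> > 0\<close> by linarith
  have "\<alpha> * g * den \<le> (N * m) * g * (N * m)"
    using assms den_le den_pos
    by (intro mult_mono) (auto intro: mult_right_mono)
  also have "\<dots> < N * ((1 - \<tau>) * (m * L\<^sub>g + \<alpha> * F)) + N * ((m * g + F) * m * N)"
  proof -
    have "N * ((1 - \<tau>) * (m * L\<^sub>g + \<alpha> * F)) \<ge> 0" and "N * (F * m * N) > 0"
      using assms by simp_all
    then show ?thesis by (simp add: algebra_simps)
  qed
  finally show ?thesis
    using den_pos by (simp add: den_def pos_less_divide_eq algebra_simps)
qed

lemma surplus_after_private_consumption:
  fixes S \<alpha> g c k :: real
  assumes "S \<noteq> 0" and "k + \<alpha> * c \<noteq> 0"
  shows "S - \<alpha> * (S * (c * (S - \<alpha> * g) / ((k + \<alpha> * c) * S)) + g)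
           = (S - \<alpha> * g) * k / (k + \<alpha> * c)"
proof -
  have "S * (c * (S - \<alpha> * g) / ((k + \<alpha> * c) * S)) = c * (S - \<alpha> * g) / (k + \<alpha> * c)"
    using assms(1) by simp
  then show ?thesis
    unfolding \<open>S * _ = _\<close> using assms(2) by (simp add: field_simps)
qed

theorem proposition2:
  fixes N m F \<alpha> w \<tau> g L\<^sub>g L q p :: real
  assumes "N > 0" and "m > 0" and "F > 0" and "\<alpha> > 0" and "w > 0"
    and "0 < \<tau>" and "\<tau> < 1" and "g \<ge> 0" and "L\<^sub>g \<ge> 0"
    and L_def: "L = N * ((1 - \<tau>) * (m * L\<^sub>g + \<alpha> * F) + (m * g + F) * m * N) / (\<alpha> + (N * m - \<alpha>) * \<tau>)"
    and q_def: "q = (1 - \<tau>) * (L + L\<^sub>g - \<alpha> * g) / ((N * m + \<alpha> * (1 - \<tau>)) * (L + L\<^sub>g))"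
    and p_def: "p = (L + L\<^sub>g) / (L + L\<^sub>g - \<alpha> * g) * (m * w + \<alpha> * (1 - \<tau>) * w / N)"
    and "N * m > \<alpha>"
  shows "L + L\<^sub>g - \<alpha> * ((L + L\<^sub>g) * q + g) > 0 \<and> p > 0"
proof -
  have "\<alpha> * g < L"
    unfolding L_def using assms by (intro alpha_g_less_private_employment) auto
  moreover have "\<alpha> * g \<ge> 0"
    using assms by simp
  ultimately have surplus: "L + L\<^sub>g - \<alpha> * g > 0" and total: "L + L\<^sub>g > 0"
    using \<open>L\<^sub>g \<ge> 0\<close> by linarith+
  have D_pos: "N * m + \<alpha> * (1 - \<tau>) > 0"
    using assms by (intro add_pos_nonneg) auto
  have "L + L\<^sub>g - \<alpha> * ((L + L\<^sub>g) * q + g)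
          = (L + L\<^sub>g - \<alpha> * g) * (N * m) / (N * m + \<alpha> * (1 - \<tau>))"
    unfolding q_def using total D_pos by (intro surplus_after_private_consumption) auto
  also have "\<dots> > 0"
    using surplus D_pos \<open>N > 0\<close> \<open>m > 0\<close> by simp
  finally have "L + L\<^sub>g - \<alpha> * ((L + L\<^sub>g) * q + g) > 0" .
  moreover have "m * w + \<alpha> * (1 - \<tau>) * w / N > 0"
    using assms(1-7) by (intro add_pos_nonneg) auto
  then have "p > 0"
    unfolding p_def using surplus total by simp
  ultimately show ?thesis ..
qed

end
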